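(* Let $N\ge2$ be an integer and let $\sigma$ be a finite nonempty set of functions $\mathbb{Z}_2\to\mathbb{Z}_N$ that is totally indistinguishable. Then the standard oracle operators $\{U_f: f\in\sigma\}$ are not unambiguously distinguishable.
   Context: A set $\sigma$ of functions $\mathbb{Z}_M\to\mathbb{Z}_N$ is totally indistinguishable if for every $x\in\mathbb{Z}_M$ and every $f\in\sigma$ there exists $f'\in\sigma$ with $f'\neq f$ and $f'(x)=f(x)$. Let $\mathcal{H}_2,\mathcal{H}_N$ be Hilbert spaces with orthonormal bases $\{|x\rangle\}_{x\in\mathbb{Z}_2}$, $\{|y\rangle\}_{y\in\mathbb{Z}_N}$. For $f:\mathbb{Z}_2\to\mathbb{Z}_N$ the standard oracle operator is the unitary $U_f$ on $\mathcal{H}_2\otimes\mathcal{H}_N$ with $U_f|x\rangle\otimes|y\rangle=|x\rangle\otimes|y\oplus f(x)\rangle$, $\oplus$ being addition mod $N$. A finite list of unitary operators $W_1,\ldots,W_K$ on a finite-dimensional Hilbert space $\mathcal{H}$ is called unambiguously distinguishable if there exist a finite-dimensional ancilla space $\mathcal{H}_A$ and a unit vector $|\psi\rangle\in\mathcal{H}\otimes\mathcal{H}_A$ such that the vectors $(W_j\otimes\mathbb{1}_A)|\psi\rangle$ are linearly independent. *)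

theory Defs
  imports Complex_Main "HOL-Library.FuncSet"
begin

text \<open>Functions Z_M -> Z_N are represented as extensional functions
  nat => nat in {0..<M} ->E {0..<N}.  Elements of Z_M are 0..M-1.\<close>

definition totally_indist :: "nat set \<Rightarrow> (nat \<Rightarrow> nat) set \<Rightarrow> bool" where
  "totally_indist X \<sigma> \<longleftrightarrow>
     (\<forall>x\<in>X. \<forall>f\<in>\<sigma>. \<exists>f'\<in>\<sigma>. f' \<noteq> f \<and> f' x = f x)"

text \<open>An operator on a finite-dimensional Hilbert space with orthonormal basis
  indexed by the finite set B is given by its matrix W b b' = <b|W|b'>.
  Vectors of H (x) H_A, where H_A has orthonormal basis indexed by {0..<d},
  are functions on B \<times> {0..<d} (extended by zero).\<close>

definition tensor_id_apply ::
  "'b set \<Rightarrow> ('b \<Rightarrow> 'b \<Rightarrow> complex) \<Rightarrow> ('b \<times> nat \<Rightarrow> complex) \<Rightarrow> ('b \<times> nat \<Rightarrow> complex)" where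
  "tensor_id_apply B W \<psi> = (\<lambda>(b, a). \<Sum>b'\<in>B. W b b' * \<psi> (b', a))"

text \<open>Unambiguous distinguishability of the family (W i) for i in I (the list
  W_1..W_K indexed by I): some finite-dimensional ancilla (dimension d) and
  unit vector psi such that the vectors (W i (x) 1) psi are linearly independent.\<close>

definition unamb_dist ::
  "'b set \<Rightarrow> 'i set \<Rightarrow> ('i \<Rightarrow> 'b \<Rightarrow> 'b \<Rightarrow> complex) \<Rightarrow> bool" where
  "unamb_dist B I W \<longleftrightarrow>
     (\<exists>d::nat. d \<ge> 1 \<and> (\<exists>\<psi> :: 'b \<times> nat \<Rightarrow> complex.
        (\<forall>p. p \<notin> B \<times> {0..<d} \<longrightarrow> \<psi> p = 0) \<and>
        (\<Sum>p\<in>B \<times> {0..<d}. (cmod (\<psi> p))\<^sup>2) = 1 \<and>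
        (\<forall>c :: 'i \<Rightarrow> complex.
           (\<forall>p\<in>B \<times> {0..<d}. (\<Sum>i\<in>I. c i * tensor_id_apply B (W i) \<psi> p) = 0)
           \<longrightarrow> (\<forall>i\<in>I. c i = 0))))"

text \<open>Standard query operator U_f |x>|y> = |x>|y + f x mod N>, on basis {0..<2} \<times> {0..<N}.\<close>

definition std_oracle_op :: "nat \<Rightarrow> (nat \<Rightarrow> nat) \<Rightarrow> (nat \<times> nat) \<Rightarrow> (nat \<times> nat) \<Rightarrow> complex" where
  "std_oracle_op N f = (\<lambda>(x, y) (x', y'). if x = x' \<and> y = (y' + f x') mod N then 1 else 0)"

end

theory Submission
  imports Defs "HOL-Library.Function_Algebras"
begin

text \<open>The output vector \<open>(U\<^sub>f \<otimes> 1)\<psi>\<close> splits as \<open>u\<^bsub>f 0\<^esub> + v\<^bsub>f 1\<^esub>\<close>,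
  where \<open>u\<^sub>k\<close> (resp. \<open>v\<^sub>k\<close>) is the part of \<psi> with query register \<open>|0\<rangle>\<close>
  (resp. \<open>|1\<rangle>\<close>) with its answer register shifted by \<open>k\<close>. Fixing one value \<open>k\<^sub>0\<close>
  of \<open>f 1\<close>, all outputs therefore lie in the span of the vectors \<open>u\<^sub>k + v\<^bsub>k\<^sub>0\<^esub>\<close>
  and \<open>v\<^sub>k - v\<^bsub>k\<^sub>0\<^esub>\<close>, whose number is \<open>|L| + |R| - 1\<close> for the value sets \<open>L\<close>, \<open>R\<close>
  of \<open>f 0\<close>, \<open>f 1\<close> on \<sigma>. Total indistinguishability means that every such value
  is taken at least twice, so \<open>|L|, |R| \<le> |\<sigma>| / 2\<close>, and the \<open>|\<sigma>|\<close> outputs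
  cannot be linearly independent.\<close>

lemma double_card_image_le:
  assumes "finite S" and "\<forall>x\<in>S. \<exists>y\<in>S. y \<noteq> x \<and> h y = h x"
  shows "2 * card (h ` S) \<le> card S"
proof -
  have "(\<Sum>z\<in>h ` S. 2) \<le> (\<Sum>z\<in>h ` S. card {x \<in> S. h x = z})"
  proof (rule sum_mono)
    fix z assume "z \<in> h ` S"
    then obtain x y where "x \<in> S" "y \<in> S" "y \<noteq> x" "h x = z" "h y = z"
      using assms(2) by force
    then have "card {x, y} \<le> card {x \<in> S. h x = z}"
      by (intro card_mono) (use assms(1) in auto)
    with \<open>y \<noteq> x\<close> show "2 \<le> card {x \<in> S. h x = z}" by simp
  qed
  also have "\<dots> = card S"
    using sum.group[OF assms(1) finite_imageI[OF assms(1)] subset_refl, where g = h and h = "\<lambda>_. 1::nat"]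
    by simp
  finally show ?thesis by simp
qed

context vector_space
begin

lemma dependent_family_if_card_span_less:
  fixes g :: "'i \<Rightarrow> 'b"
  assumes I: "finite I" and S: "finite S" and card_less: "card S < card I"
    and span: "g ` I \<subseteq> span S"
  obtains c where "(\<Sum>i\<in>I. c i *s g i) = 0" and "\<exists>i\<in>I. c i \<noteq> 0"
proof (cases "inj_on g I")
  case False
  then obtain i j where ij: "i \<in> I" "j \<in> I" "i \<noteq> j" "g i = g j"
    by (auto simp: inj_on_def)
  define c :: "'i \<Rightarrow> 'a" where "c k = (if k = i then 1 else if k = j then -1 else 0)" for k
  have "(\<Sum>k\<in>I. c k *s g k) = (\<Sum>k\<in>{i, j}. c k *s g k)"
    by (rule sum.mono_neutral_right) (use I ij in \<open>auto simp: c_def\<close>)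
  also have "\<dots> = 0"
    using ij by (simp add: c_def)
  finally have "(\<Sum>k\<in>I. c k *s g k) = 0" .
  moreover have "c i \<noteq> 0"
    by (simp add: c_def)
  ultimately show ?thesis
    using that ij(1) by blast
next
  case True
  then have "dependent (g ` I)"
    using independent_span_bound[OF S _ span] card_less by (auto simp: card_image)
  then obtain u where u: "\<exists>v\<in>g ` I. u v \<noteq> 0" "(\<Sum>v\<in>g ` I. u v *s v) = 0"
    using dependent_finite I by auto
  have "(\<Sum>i\<in>I. u (g i) *s g i) = 0"
    using u(2) by (simp add: sum.reindex[OF True])
  then show ?thesis
    using that u(1) by auto
qed

lemma sum_family_span_subset:
  assumes I: "finite I" "I \<noteq> {}"
  obtains S where "finite S" and "card S < card (a ` I) + card (b ` I)"
    and "(\<lambda>i. u (a i) + v (b i)) ` I \<subseteq> span S"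
proof -
  obtain i\<^sub>0 where "i\<^sub>0 \<in> I"
    using I(2) by blast
  define S where "S = (\<lambda>x. u x + v (b i\<^sub>0)) ` a ` I \<union> (\<lambda>y. v y - v (b i\<^sub>0)) ` (b ` I - {b i\<^sub>0})"
  have "card S \<le> card (a ` I) + card (b ` I - {b i\<^sub>0})"
    unfolding S_def
    by (rule order_trans[OF card_Un_le add_mono[OF card_image_le card_image_le]]) (use I in auto)
  also have "\<dots> < card (a ` I) + card (b ` I)"
    using I \<open>i\<^sub>0 \<in> I\<close> card_gt_0_iff[of "b ` I"] by auto
  finally have "card S < card (a ` I) + card (b ` I)" .
  moreover have "u (a i) + v (b i) \<in> span S" if "i \<in> I" for i
  proof -
    have "u (a i) + v (b i\<^sub>0) \<in> span S"
      using that by (intro span_base) (auto simp: S_def)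
    moreover have "v (b i) - v (b i\<^sub>0) \<in> span S"
      using that by (cases "b i = b i\<^sub>0") (auto intro: span_base simp: S_def span_zero)
    ultimately have "(u (a i) + v (b i\<^sub>0)) + (v (b i) - v (b i\<^sub>0)) \<in> span S"
      by (rule span_add)
    then show ?thesis
      by simp
  qed
  moreover have "finite S"
    using I(1) by (simp add: S_def)
  ultimately show ?thesis
    using that by blast
qed

lemma dependent_sum_family_if_values_repeated:
  assumes I: "finite I" "I \<noteq> {}"
    and a: "\<forall>i\<in>I. \<exists>j\<in>I. j \<noteq> i \<and> a j = a i"
    and b: "\<forall>i\<in>I. \<exists>j\<in>I. j \<noteq> i \<and> b j = b i"
  obtains c where "(\<Sum>i\<in>I. c i *s (u (a i) + v (b i))) = 0" and "\<exists>i\<in>I. c i \<noteq> 0"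
proof -
  obtain S where S: "finite S" "card S < card (a ` I) + card (b ` I)"
    and span: "(\<lambda>i. u (a i) + v (b i)) ` I \<subseteq> span S"
    by (rule sum_family_span_subset[OF I])
  have "card S < card I"
    using S(2) double_card_image_le[OF I(1) a] double_card_image_le[OF I(1) b] by linarith
  from dependent_family_if_card_span_less[OF I(1) S(1) this span] that show ?thesis .
qed

end

interpretation fun_vector_space: vector_space "\<lambda>(c::complex) (v::'x \<Rightarrow> complex) x. c * v x"
  by unfold_locales (simp_all add: fun_eq_iff algebra_simps)

lemma sum_fun_apply: "(\<Sum>i\<in>A. F i) x = (\<Sum>i\<in>A. F i x)"
  for F :: "'i \<Rightarrow> 'x \<Rightarrow> 'a::comm_monoid_add"
  by (induction A rule: infinite_finite_induct) auto

lemma not_unamb_dist_if_dependent: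
  assumes "\<And>\<psi>. \<exists>c. (\<forall>p. (\<Sum>i\<in>I. c i * tensor_id_apply B (W i) \<psi> p) = 0) \<and> (\<exists>i\<in>I. c i \<noteq> 0)"
  shows "\<not> unamb_dist B I W"
  using assms unfolding unamb_dist_def by meson

text \<open>\<open>oracle_branch N x\<^sub>0 \<psi> k\<close> is the component of \<open>(U\<^sub>f \<otimes> 1)\<psi>\<close> on query
  register \<open>|x\<^sub>0\<rangle>\<close> for any \<open>f\<close> with \<open>f x\<^sub>0 = k\<close>.\<close>

definition oracle_branch ::
  "nat \<Rightarrow> nat \<Rightarrow> ((nat \<times> nat) \<times> nat \<Rightarrow> complex) \<Rightarrow> nat \<Rightarrow> (nat \<times> nat) \<times> nat \<Rightarrow> complex" where
  "oracle_branch N x\<^sub>0 \<psi> k = (\<lambda>((x, y), a).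
     if x = x\<^sub>0 then (\<Sum>y'\<in>{0..<N}. if y = (y' + k) mod N then \<psi> ((x\<^sub>0, y'), a) else 0) else 0)"

lemma std_oracle_apply_eq_branches:
  "tensor_id_apply ({0..<2} \<times> {0..<N}) (std_oracle_op N f) \<psi> p =
     oracle_branch N 0 \<psi> (f 0) p + oracle_branch N 1 \<psi> (f 1) p"
proof -
  obtain x y a where p: "p = ((x, y), a)"
    by (metis prod.collapse)
  have "tensor_id_apply ({0..<2} \<times> {0..<N}) (std_oracle_op N f) \<psi> p =
      (\<Sum>x'\<in>{0..<2}. \<Sum>y'\<in>{0..<N}. (if x = x' \<and> y = (y' + f x') mod N then 1 else 0) * \<psi> ((x', y'), a))"
    unfolding p tensor_id_apply_def std_oracle_op_def
    by (simp add: sum.cartesian_product split_beta)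
  also have "\<dots> = (\<Sum>x'\<in>{0, 1}. \<Sum>y'\<in>{0..<N}. (if x = x' \<and> y = (y' + f x') mod N then 1 else 0) * \<psi> ((x', y'), a))"
    by (rule sum.cong) auto
  also have "\<dots> = oracle_branch N 0 \<psi> (f 0) p + oracle_branch N 1 \<psi> (f 1) p"
    unfolding p oracle_branch_def by (cases "x = 0"; cases "x = 1") (auto intro: sum.cong)
  finally show ?thesis .
qed

theorem theorem5:
  fixes N :: nat and \<sigma> :: "(nat \<Rightarrow> nat) set"
  assumes "N \<ge> 2"
    and "finite \<sigma>" and "\<sigma> \<noteq> {}"
    and "\<sigma> \<subseteq> {0..<2} \<rightarrow>\<^sub>E {0..<N}"
    and "totally_indist {0..<2} \<sigma>"
  shows "\<not> unamb_dist ({0..<2} \<times> {0..<N}) \<sigma> (std_oracle_op N)"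
proof (rule not_unamb_dist_if_dependent)
  fix \<psi> :: "(nat \<times> nat) \<times> nat \<Rightarrow> complex"
  have "\<forall>f\<in>\<sigma>. \<exists>f'\<in>\<sigma>. f' \<noteq> f \<and> f' 0 = f 0" "\<forall>f\<in>\<sigma>. \<exists>f'\<in>\<sigma>. f' \<noteq> f \<and> f' 1 = f 1"
    using assms(5) by (simp_all add: totally_indist_def)
  then obtain c where
    c: "(\<Sum>f\<in>\<sigma>. (\<lambda>p. c f * (oracle_branch N 0 \<psi> (f 0) + oracle_branch N 1 \<psi> (f 1)) p)) = 0"
    and "\<exists>f\<in>\<sigma>. c f \<noteq> 0"
    by (rule fun_vector_space.dependent_sum_family_if_values_repeated[OF assms(2,3),
        where u = "oracle_branch N 0 \<psi>" and v = "oracle_branch N 1 \<psi>"])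
  moreover have "\<forall>p. (\<Sum>f\<in>\<sigma>. c f * tensor_id_apply ({0..<2} \<times> {0..<N}) (std_oracle_op N f) \<psi> p) = 0"
    using fun_cong[OF c] by (simp add: sum_fun_apply std_oracle_apply_eq_branches distrib_left)
  ultimately show "\<exists>c. (\<forall>p. (\<Sum>f\<in>\<sigma>. c f * tensor_id_apply ({0..<2} \<times> {0..<N}) (std_oracle_op N f) \<psi> p) = 0)
      \<and> (\<exists>f\<in>\<sigma>. c f \<noteq> 0)"
    by blast
qed

end
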